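(* Let $B$ be an $n\times n$ matrix all of whose entries are $-1$ or $+1$, and suppose all eigenvalues of $B$ are real and positive. Then $n=1$ and $B=[1]$.
   Context: Eigenvalues are taken over $\mathbb{C}$. *)

theory Defs
  imports "Jordan_Normal_Form.Char_Poly"
begin

end

theory Submission
  imports Defs "Jordan_Normal_Form.Schur_Decomposition"
begin

text \<open>Schur triangularisation over \<open>\<complex>\<close> shows that \<open>det B\<close> and \<open>trace B\<close> are the product and the
  sum of the eigenvalues. These are positive reals whose sum is at most \<open>n\<close>, since every diagonal
  entry is at most 1, so by AM-GM \<open>0 < det B \<le> 1\<close>, i.e. \<open>det B = 1\<close>. On the other hand,
  subtracting the first row of \<open>B\<close> from the others leaves \<open>n - 1\<close> rows of even entries, so
  \<open>2 ^ (n - 1)\<close> divides \<open>det B\<close>, which forces \<open>n = 1\<close>.\<close>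

definition trace :: "'a::comm_ring_1 mat \<Rightarrow> 'a" where
  "trace A = (\<Sum>i<dim_row A. A $$ (i, i))"

lemma trace_eq_sum_list_diag_mat: "trace A = sum_list (diag_mat A)"
  by (simp add: trace_def diag_mat_def sum_list_sum_nth atLeast0LessThan)

lemma trace_mult_comm:
  assumes "A \<in> carrier_mat n m" and "B \<in> carrier_mat m n"
  shows "trace (A * B) = trace (B * A)"
proof -
  have "trace (A * B) = (\<Sum>i<n. \<Sum>k<m. A $$ (i, k) * B $$ (k, i))"
    using assms by (auto simp: trace_def scalar_prod_def atLeast0LessThan intro!: sum.cong)
  also have "\<dots> = (\<Sum>k<m. \<Sum>i<n. B $$ (k, i) * A $$ (i, k))"
    by (subst sum.swap) (simp add: mult.commute)
  also have "\<dots> = trace (B * A)"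
    using assms by (auto simp: trace_def scalar_prod_def atLeast0LessThan intro!: sum.cong)
  finally show ?thesis .
qed

lemma trace_similar:
  assumes "similar_mat A B"
  shows "trace A = trace B"
proof -
  from similar_matD[OF assms] obtain n P Q where
    carr: "{A, B, P, Q} \<subseteq> carrier_mat n n" and QP: "Q * P = 1\<^sub>m n" and AB: "A = P * B * Q"
    by blast
  have "trace A = trace (P * (B * Q))"
    using carr AB by (simp add: assoc_mult_mat[of P n n B n Q n])
  also have "\<dots> = trace (B * Q * P)"
    using carr by (subst trace_mult_comm[of _ n n]) auto
  also have "\<dots> = trace B"
    using carr QP by (auto simp: assoc_mult_mat[of B n n Q n P n])
  finally show ?thesis .
qed

lemma of_int_trace:
  assumes "A \<in> carrier_mat n n"
  shows "of_int (trace A) = trace (map_mat of_int A)"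
  using assms by (simp add: trace_def)

lemma complex_mat_eigenvalue_list:
  fixes A :: "complex mat"
  assumes A: "A \<in> carrier_mat n n"
  obtains es where "length es = n" "\<And>e. e \<in> set es \<Longrightarrow> eigenvalue A e"
    "det A = prod_list es" "trace A = sum_list es"
proof -
  obtain es where cp: "char_poly A = (\<Prod>a \<leftarrow> es. [:- a, 1:])" and len: "length es = n"
    using char_poly_factorized[OF A] by blast
  obtain C P Q where "schur_decomposition A es = (C, P, Q)"
    by (cases "schur_decomposition A es") auto
  with schur_decomposition[OF A cp]
  have wit: "similar_mat_wit A C P Q" and ut: "upper_triangular C" and diag: "diag_mat C = es"
    by auto
  have C: "C \<in> carrier_mat n n" and sim: "similar_mat A C"
    using similar_mat_witD2[OF A wit] wit by (auto simp: similar_mat_def)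
  have "eigenvalue A e" if "e \<in> set es" for e
  proof -
    have "poly (char_poly A) e = 0"
      using that by (auto simp: cp poly_prod_list prod_list_zero_iff)
    then show ?thesis
      using eigenvalue_root_char_poly[OF A] by simp
  qed
  moreover have "det A = prod_list es"
    using det_similar[OF sim] det_upper_triangular[OF ut C] diag by simp
  moreover have "trace A = sum_list es"
    using trace_similar[OF sim] diag by (simp add: trace_eq_sum_list_diag_mat)
  ultimately show ?thesis
    using that len by blast
qed

lemma prod_list_le_exp_sum_list:
  fixes xs :: "real list"
  assumes "\<And>x. x \<in> set xs \<Longrightarrow> 0 \<le> x"
  shows "prod_list xs \<le> exp (sum_list xs - length xs)"
  using assms
proof (induction xs)
  case Nil
  then show ?case by simp
next
  case (Cons x xs)
  have "x * prod_list xs \<le> exp (x - 1) * exp (sum_list xs - length xs)"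
    using Cons exp_ge_add_one_self[of "x - 1"]
    by (intro mult_mono) (auto intro: prod_list_nonneg)
  then show ?case
    by (simp add: exp_add[symmetric] algebra_simps)
qed

lemma det_le_1_if_positive_spectrum:
  fixes A :: "complex mat"
  assumes A: "A \<in> carrier_mat n n"
    and spectrum: "\<And>mu. eigenvalue A mu \<Longrightarrow> mu \<in> \<real> \<and> Re mu > 0"
    and trace_le: "Re (trace A) \<le> n"
  shows "det A \<in> \<real> \<and> 0 < Re (det A) \<and> Re (det A) \<le> 1"
proof -
  obtain es where len: "length es = n" and eig: "\<And>e. e \<in> set es \<Longrightarrow> eigenvalue A e"
    and det: "det A = prod_list es" and tr: "trace A = sum_list es"
    using complex_mat_eigenvalue_list[OF A] by blast
  define rs where "rs = map Re es"
  have "es = map complex_of_real rs"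
    unfolding rs_def map_map
    by (rule map_idI[symmetric]) (use spectrum eig in \<open>auto simp: complex_is_Real_iff\<close>)
  moreover have "prod_list (map complex_of_real rs) = of_real (prod_list rs)"
    and "sum_list (map complex_of_real rs) = of_real (sum_list rs)"
    by (induction rs) auto
  ultimately have det_rs: "det A = of_real (prod_list rs)" and tr_rs: "trace A = of_real (sum_list rs)"
    using det tr by simp_all
  have rs_pos: "0 < r" if "r \<in> set rs" for r
    using that spectrum eig by (auto simp: rs_def)
  have "sum_list rs \<le> length rs"
    using trace_le tr_rs len by (simp add: rs_def)
  moreover have "prod_list rs \<le> exp (sum_list rs - length rs)"
    using rs_pos by (intro prod_list_le_exp_sum_list) (simp add: less_imp_le)
  ultimately have "prod_list rs \<le> 1"
    by (meson exp_le_one_iff diff_le_0_iff_le order_trans)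
  moreover have "0 < prod_list rs"
    using rs_pos by (induction rs) auto
  ultimately show ?thesis
    using det_rs by simp
qed

lemma two_pow_dvd_det_if_odd_entries:
  fixes B :: "int mat"
  assumes B: "B \<in> carrier_mat n n"
    and odd: "\<And>i j. i < n \<Longrightarrow> j < n \<Longrightarrow> odd (B $$ (i, j))"
  shows "2 ^ (n - 1) dvd det B"
proof (cases "n = 0")
  case True
  then show ?thesis by simp
next
  case False
  define E :: "int mat"
    where "E = mat n n (\<lambda>(i, j). if i = j then 1 else if j = 0 then -1 else 0)"
  have E: "E \<in> carrier_mat n n"
    by (simp add: E_def)
  have "det E = prod_list (diag_mat E)"
    by (rule det_lower_triangular[OF _ E]) (auto simp: E_def)
  then have det_E: "det E = 1"
    by (simp add: prod_list_diag_prod E_def)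
  have EB: "(E * B) $$ (i, j) = (if i = 0 then B $$ (0, j) else B $$ (i, j) - B $$ (0, j))"
    if "i < n" "j < n" for i j
  proof -
    have "(E * B) $$ (i, j) = (\<Sum>k = 0..<n. E $$ (i, k) * B $$ (k, j))"
      using that E B by (simp add: scalar_prod_def)
    also have "\<dots> = (\<Sum>k = 0..<n. (if k = i then B $$ (k, j) else 0)
        + (if k = 0 \<and> i \<noteq> 0 then - B $$ (k, j) else 0))"
      using that by (intro sum.cong) (auto simp: E_def)
    finally show ?thesis
      using that False by (simp add: sum.distrib)
  qed
  have "2 ^ (n - 1) dvd (\<Prod>i = 0..<n. (E * B) $$ (i, p i))" if p: "p permutes {0..<n}" for p
  proof -
    have "(\<Prod>i = 1..<n. 2) dvd (\<Prod>i = 1..<n. (E * B) $$ (i, p i))"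
    proof (rule prod_dvd_prod)
      fix i assume "i \<in> {1..<n}"
      moreover have "p i < n"
        using p \<open>i \<in> {1..<n}\<close> by (simp add: permutes_in_image)
      ultimately show "2 dvd (E * B) $$ (i, p i)"
        using EB[of i "p i"] odd[of i "p i"] odd[of 0 "p i"] by auto
    qed
    moreover have "{0..<n} = insert 0 {1..<n}"
      using False by auto
    ultimately show ?thesis
      by (simp add: dvd_mult)
  qed
  then have "2 ^ (n - 1) dvd det (E * B)"
    unfolding det_def'[OF mult_carrier_mat[OF E B]] by (intro dvd_sum) (simp add: dvd_mult)
  then show ?thesis
    using det_mult[OF E B] det_E by simp
qed

lemma sign_mat_det_eq_1D:
  fixes B :: "int mat"
  assumes "n \<ge> 1" and B: "B \<in> carrier_mat n n"
    and sign: "\<And>i j. i < n \<Longrightarrow> j < n \<Longrightarrow> B $$ (i, j) = 1 \<or> B $$ (i, j) = -1"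
    and det: "det B = 1"
  shows "n = 1 \<and> B = mat 1 1 (\<lambda>_. 1)"
proof -
  have "(2::int) ^ (n - 1) dvd 1"
    using two_pow_dvd_det_if_odd_entries[OF B] sign det by fastforce
  then have n: "n = 1"
    using \<open>n \<ge> 1\<close> by simp
  then have "B $$ (0, 0) = 1"
    using det_single[of B] B det by simp
  then show ?thesis
    using B n by (auto intro!: eq_matI)
qed

theorem mainTheorem6:
  fixes B :: "int mat" and n :: nat
  assumes "n \<ge> 1"
    and "B \<in> carrier_mat n n"
    and "\<And>i j. i < n \<Longrightarrow> j < n \<Longrightarrow> B $$ (i, j) = 1 \<or> B $$ (i, j) = -1"
    and "\<And>mu. eigenvalue (map_mat (of_int :: int \<Rightarrow> complex) B) mu \<Longrightarrow>
            mu \<in> \<real> \<and> Re mu > 0"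
  shows "n = 1 \<and> B = mat 1 1 (\<lambda>_. 1)"
proof -
  let ?A = "map_mat (of_int :: int \<Rightarrow> complex) B"
  have A: "?A \<in> carrier_mat n n"
    using assms(2) by simp
  have diag_le_1: "B $$ (i, i) \<le> 1" if "i < n" for i
    using assms(3)[OF that that] by auto
  have "trace B = (\<Sum>i<n. B $$ (i, i))"
    using assms(2) by (simp add: trace_def)
  also have "\<dots> \<le> (\<Sum>i<n. 1)"
    using diag_le_1 by (intro sum_mono) simp
  finally have "Re (trace ?A) \<le> n"
    unfolding of_int_trace[OF assms(2), symmetric] by simp
  then have "0 < Re (det ?A) \<and> Re (det ?A) \<le> 1"
    using det_le_1_if_positive_spectrum[OF A assms(4)] by blast
  then have "det B = 1"
    by (simp add: of_int_hom.hom_det)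
  then show ?thesis
    using sign_mat_det_eq_1D[OF assms(1-3)] by blast
qed

end
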